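(* Let $\Phi_{CC}$ be a PCDS quantum channel on $\mathcal{H}_C=\mathcal{H}_A\oplus\mathcal{H}_B$, with diagonal blocks $\Phi_{AA}$ and $\Phi_{BB}$ (which are quantum channels on $\mathcal{H}_A$ and $\mathcal{H}_B$ respectively). Then $\Phi_{CC}$ is degradable if and only if both $\Phi_{AA}$ and $\Phi_{BB}$ are degradable.
   Context: All Hilbert spaces are finite-dimensional. $\mathcal{H}_C=\mathcal{H}_A\oplus\mathcal{H}_B$ with orthogonal projectors $\hat P_{AA},\hat P_{BB}$ onto the two nontrivial summands, and for an operator $\hat\Theta_{CC}$ on $\mathcal{H}_C$, $\hat\Theta_{XY}:=\hat P_{XX}\hat\Theta_{CC}\hat P_{YY}$. A quantum channel $\Phi_{CC}$ on $\mathcal{H}_C$ is PCDS if there are linear maps $\Phi_{AA},\Phi_{BB},\Phi^{(off)}_{AB},\Phi^{(off)}_{BA}$ (acting on operators $\mathcal{H}_A\to\mathcal{H}_A$, $\mathcal{H}_B\to\mathcal{H}_B$, $\mathcal{H}_B\to\mathcal{H}_A$, $\mathcal{H}_A\to\mathcal{H}_B$ respectively) with $\Phi_{CC}[\hat\Theta_{CC}]=\Phi_{AA}[\hat\Theta_{AA}]+\Phi_{BB}[\hat\Theta_{BB}]+\Phi^{(off)}_{AB}[\hat\Theta_{AB}]+\Phi^{(off)}_{BA}[\hat\Theta_{BA}]$ for all $\hat\Theta_{CC}$; equivalently, it has a Kraus set $\{\hat M^{(j)}_{CC}=\hat M^{(j)}_{AA}+\hat M^{(j)}_{BB}\}_j$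 of block-diagonal operators, and then $\Phi_{XX}[\cdot]=\sum_j\hat M^{(j)}_{XX}\cdot\hat M^{(j)\dagger}_{XX}$ for $X=A,B$. For a channel $\Phi_{XX}$ with Kraus set $\{\hat M^{(j)}\}_j$ and an orthonormal set $\{|j_E\rangle\}$ of an environment space $\mathcal{H}_E$, the complementary channel is $\tilde\Phi_{EX}[\hat\Theta]=\sum_{j,j'}|j_E\rangle\langle j'_E|\,\mathrm{Tr}[\hat M^{(j')\dagger}\hat M^{(j)}\hat\Theta]$ (defined up to a unitary on $E$). $\Phi_{XX}$ is degradable if there exists a quantum channel $\Lambda_{EX}$ from $X$ to $E$ with $\tilde\Phi_{EX}=\Lambda_{EX}\circ\Phi_{XX}$. *)

theory Defs
  imports "Jordan_Normal_Form.Matrix"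
begin

text \<open>Operators on a d-dimensional Hilbert space C^d are complex d x d matrices.
  A (super)operator is modelled as a function on complex matrices; only its
  values on the relevant carrier are meaningful.\<close>

definition dag :: "complex mat \<Rightarrow> complex mat" where
  "dag A = mat (dim_col A) (dim_row A) (\<lambda>(i,j). cnj (A $$ (j,i)))"

definition mtrace :: "complex mat \<Rightarrow> complex" where
  "mtrace A = (\<Sum>i<dim_row A. A $$ (i,i))"

definition msum :: "nat \<Rightarrow> nat \<Rightarrow> complex mat list \<Rightarrow> complex mat" where
  "msum r c Xs = foldr (+) Xs (0\<^sub>m r c)"

definition kraus_set :: "nat \<Rightarrow> nat \<Rightarrow> (complex mat \<Rightarrow> complex mat) \<Rightarrow> complex mat list \<Rightarrow> bool" where
  "kraus_set d1 d2 Phi Ms \<longleftrightarrow>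
     (\<forall>M\<in>set Ms. M \<in> carrier_mat d2 d1) \<and>
     msum d1 d1 (map (\<lambda>M. dag M * M) Ms) = 1\<^sub>m d1 \<and>
     (\<forall>\<rho>\<in>carrier_mat d1 d1. Phi \<rho> = msum d2 d2 (map (\<lambda>M. M * \<rho> * dag M) Ms))"

text \<open>Quantum channel (CPTP map) from C^d1 to C^d2: one with a Kraus representation.\<close>
definition qchannel :: "nat \<Rightarrow> nat \<Rightarrow> (complex mat \<Rightarrow> complex mat) \<Rightarrow> bool" where
  "qchannel d1 d2 Phi \<longleftrightarrow> (\<exists>Ms. kraus_set d1 d2 Phi Ms)"

text \<open>Complementary channel w.r.t. the Kraus set Ms, environment C^(length Ms) with
  standard basis |j_E>: entry (j,j') is Tr[M_{j'}^dag M_j Theta].\<close>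
definition compl_chan :: "complex mat list \<Rightarrow> complex mat \<Rightarrow> complex mat" where
  "compl_chan Ms \<Theta> = mat (length Ms) (length Ms)
      (\<lambda>(j,j'). mtrace (dag (Ms ! j') * (Ms ! j) * \<Theta>))"

definition degradable :: "nat \<Rightarrow> (complex mat \<Rightarrow> complex mat) \<Rightarrow> bool" where
  "degradable d Phi \<longleftrightarrow>
     (\<exists>Ms Lam. kraus_set d d Phi Ms \<and> qchannel d (length Ms) Lam \<and>
        (\<forall>\<Theta>\<in>carrier_mat d d. compl_chan Ms \<Theta> = Lam (Phi \<Theta>)))"

definition lin_on :: "nat \<Rightarrow> nat \<Rightarrow> (complex mat \<Rightarrow> complex mat) \<Rightarrow> bool" where
  "lin_on r c f \<longleftrightarrow> (\<forall>X\<in>carrier_mat r c. \<forall>Y\<in>carrier_mat r c. \<forall>a::complex.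
      f (a \<cdot>\<^sub>m X + Y) = a \<cdot>\<^sub>m f X + f Y)"

text \<open>PCDS decomposition of Phi on C^(n+m) = C^n (+) C^m (A = first n coordinates,
  B = last m coordinates). Theta_XY = P_XX Theta P_YY is identified with its block,
  and Phi_XY maps operators H_Y -> H_X to operators H_Y -> H_X.\<close>
definition pcds :: "nat \<Rightarrow> nat \<Rightarrow> (complex mat \<Rightarrow> complex mat) \<Rightarrow>
    (complex mat \<Rightarrow> complex mat) \<Rightarrow> (complex mat \<Rightarrow> complex mat) \<Rightarrow>
    (complex mat \<Rightarrow> complex mat) \<Rightarrow> (complex mat \<Rightarrow> complex mat) \<Rightarrow> bool" where
  "pcds n m Phi PhiAA PhiAB PhiBA PhiBB \<longleftrightarrow>
     lin_on n n PhiAA \<and> lin_on m m PhiBB \<and> lin_on n m PhiAB \<and> lin_on m n PhiBA \<and>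
     (\<forall>X\<in>carrier_mat n n. PhiAA X \<in> carrier_mat n n) \<and>
     (\<forall>X\<in>carrier_mat m m. PhiBB X \<in> carrier_mat m m) \<and>
     (\<forall>X\<in>carrier_mat n m. PhiAB X \<in> carrier_mat n m) \<and>
     (\<forall>X\<in>carrier_mat m n. PhiBA X \<in> carrier_mat m n) \<and>
     (\<forall>TAA\<in>carrier_mat n n. \<forall>TAB\<in>carrier_mat n m. \<forall>TBA\<in>carrier_mat m n. \<forall>TBB\<in>carrier_mat m m.
        Phi (four_block_mat TAA TAB TBA TBB) =
        four_block_mat (PhiAA TAA) (PhiAB TAB) (PhiBA TBA) (PhiBB TBB))"

end

theory Submission
  imports Defs "Jordan_Normal_Form.Gauss_Jordan_Elimination"
begin

text \<open>A PCDS channel has a Kraus set of block-diagonal operators \<open>M = M\<^sub>A \<oplus> M\<^sub>B\<close>, and the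
  blocks form Kraus sets of \<open>Phi\<^sub>A\<^sub>A\<close> and \<open>Phi\<^sub>B\<^sub>B\<close>. With respect to these, the complementary
  channel of \<open>Phi\<^sub>A\<^sub>A\<close> is the complementary channel of \<open>Phi\<close> restricted to operators on \<open>H\<^sub>A\<close>,
  so a degrader of \<open>Phi\<close> degrades \<open>Phi\<^sub>A\<^sub>A\<close>, and likewise for \<open>B\<close>. Conversely, the
  complementary channel of \<open>Phi\<close> at \<open>\<Theta>\<close> is the sum of those of the blocks at \<open>\<Theta>\<^sub>A\<^sub>A\<close> and
  \<open>\<Theta>\<^sub>B\<^sub>B\<close>, so degraders \<open>Lam\<^sub>A\<close>, \<open>Lam\<^sub>B\<close> for the block Kraus sets combine to the degrader
  \<open>X \<mapsto> Lam\<^sub>A X\<^sub>A\<^sub>A + Lam\<^sub>B X\<^sub>B\<^sub>B\<close>.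

  Since degradability only provides a degrader for some Kraus set, the converse also needs
  degraders for every Kraus set. The vectorisations of two Kraus sets of one channel have the
  same Gram matrix, so they differ by a partial isometry, and conjugation by it, completed to a
  channel, maps one complementary channel to the other.\<close>

section \<open>Adjoints, traces and finite sums of matrices\<close>

lemma dag_dims [simp]: "dim_row (dag A) = dim_col A" "dim_col (dag A) = dim_row A"
  by (simp_all add: dag_def)

lemma index_dag [simp]: "i < dim_col A \<Longrightarrow> j < dim_row A \<Longrightarrow> dag A $$ (i,j) = cnj (A $$ (j,i))"
  by (simp add: dag_def)

lemma dag_carrier_mat_iff [simp]: "dag A \<in> carrier_mat r c \<longleftrightarrow> A \<in> carrier_mat c r"
  unfolding carrier_mat_def by auto

lemma mult_carrier_mat_iff [simp]: "A * B \<in> carrier_mat r c \<longleftrightarrow> dim_row A = r \<and> dim_col B = c"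
  unfolding carrier_mat_def by simp

lemma dag_dag [simp]: "dag (dag A) = A"
  by (rule eq_matI) auto

lemma dag_one [simp]: "dag (1\<^sub>m n) = 1\<^sub>m n"
  by (rule eq_matI) auto

lemma dag_zero [simp]: "dag (0\<^sub>m r c) = 0\<^sub>m c r"
  by (rule eq_matI) auto

lemma dag_mult: "dim_col A = dim_row B \<Longrightarrow> dag (A * B) = dag B * dag A"
  by (rule eq_matI) (auto simp: scalar_prod_def cnj_sum mult.commute)

lemma dag_add: "dim_row A = dim_row B \<Longrightarrow> dim_col A = dim_col B \<Longrightarrow> dag (A + B) = dag A + dag B"
  by (rule eq_matI) auto

lemma dag_minus: "dim_row A = dim_row B \<Longrightarrow> dim_col A = dim_col B \<Longrightarrow> dag (A - B) = dag A - dag B"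
  by (rule eq_matI) auto

text \<open>The ring laws of \<open>complex mat\<close> with their carrier premises replaced by
  dimension equations, so that the simplifier can discharge them.\<close>

lemma assoc_mult_mat_dims: fixes A B C :: "complex mat"
  shows "dim_col A = dim_row B \<Longrightarrow> dim_col B = dim_row C \<Longrightarrow> A * B * C = A * (B * C)"
  by (rule assoc_mult_mat[OF carrier_mat_triv carrier_matI carrier_matI]) auto

lemma mult_add_distrib_mat_dims: fixes A B C :: "complex mat"
  shows "dim_col A = dim_row B \<Longrightarrow> dim_row B = dim_row C \<Longrightarrow> dim_col B = dim_col C \<Longrightarrow>
    A * (B + C) = A * B + A * C"
  by (rule mult_add_distrib_mat[OF carrier_mat_triv carrier_matI carrier_matI]) auto

lemma add_mult_distrib_mat_dims: fixes A B C :: "complex mat"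
  shows "dim_row A = dim_row B \<Longrightarrow> dim_col A = dim_col B \<Longrightarrow> dim_col B = dim_row C \<Longrightarrow>
    (A + B) * C = A * C + B * C"
  by (rule add_mult_distrib_mat[OF carrier_mat_triv carrier_matI carrier_matI]) auto

lemma mult_minus_distrib_mat_dims: fixes A B C :: "complex mat"
  shows "dim_col A = dim_row B \<Longrightarrow> dim_row B = dim_row C \<Longrightarrow> dim_col B = dim_col C \<Longrightarrow>
    A * (B - C) = A * B - A * C"
  by (rule mult_minus_distrib_mat[OF carrier_mat_triv carrier_matI carrier_matI]) auto

lemma minus_mult_distrib_mat_dims: fixes A B C :: "complex mat"
  shows "dim_row A = dim_row B \<Longrightarrow> dim_col A = dim_col B \<Longrightarrow> dim_col B = dim_row C \<Longrightarrow>
    (A - B) * C = A * C - B * C"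
  by (rule minus_mult_distrib_mat[OF carrier_mat_triv carrier_matI carrier_matI]) auto

lemmas mat_dims_simps = assoc_mult_mat_dims mult_add_distrib_mat_dims add_mult_distrib_mat_dims
  mult_minus_distrib_mat_dims minus_mult_distrib_mat_dims dag_mult dag_add dag_minus

lemma minus_eq_0_mat_iff: fixes A B :: "complex mat"
  assumes "A \<in> carrier_mat r c" "B \<in> carrier_mat r c"
  shows "A - B = 0\<^sub>m r c \<longleftrightarrow> A = B"
proof
  assume diff: "A - B = 0\<^sub>m r c"
  show "A = B"
  proof (rule eq_matI)
    fix i j assume "i < dim_row B" "j < dim_col B"
    then show "A $$ (i,j) = B $$ (i,j)"
      using assms arg_cong[OF diff, of "\<lambda>X. X $$ (i,j)"] by auto
  qed (use assms in auto)
qed (use assms in auto)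

lemma add_zero_mat_dims [simp]:
  fixes A :: "complex mat"
  shows "dim_row A = r \<Longrightarrow> dim_col A = c \<Longrightarrow> A + 0\<^sub>m r c = A"
    and "dim_row A = r \<Longrightarrow> dim_col A = c \<Longrightarrow> 0\<^sub>m r c + A = A"
  by (rule eq_matI; simp)+

lemma mtrace_mult_comm: assumes "A \<in> carrier_mat a b" "B \<in> carrier_mat b a"
  shows "mtrace (A * B) = mtrace (B * A)"
proof -
  have "mtrace (A * B) = (\<Sum>i<a. \<Sum>k<b. A $$ (i,k) * B $$ (k,i))"
    using assms by (simp add: mtrace_def scalar_prod_def atLeast0LessThan)
  also have "\<dots> = (\<Sum>k<b. \<Sum>i<a. B $$ (k,i) * A $$ (i,k))"
    by (subst sum.swap) (simp add: mult.commute)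
  also have "\<dots> = mtrace (B * A)"
    using assms by (simp add: mtrace_def scalar_prod_def atLeast0LessThan)
  finally show ?thesis .
qed

lemma mtrace_add: "A \<in> carrier_mat a a \<Longrightarrow> B \<in> carrier_mat a a \<Longrightarrow> mtrace (A + B) = mtrace A + mtrace B"
  by (simp add: mtrace_def sum.distrib)

lemma mtrace_mult_dag_self: "mtrace (N * dag N) = of_real (\<Sum>i<dim_row N. \<Sum>j<dim_col N. (cmod (N $$ (i,j)))\<^sup>2)"
proof -
  have "mtrace (N * dag N) = (\<Sum>i<dim_row N. \<Sum>j<dim_col N. N $$ (i,j) * cnj (N $$ (i,j)))"
    by (simp add: mtrace_def scalar_prod_def atLeast0LessThan)
  then show ?thesis
    by (simp only: complex_norm_square[symmetric] of_real_sum)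
qed

lemma msum_Nil [simp]: "msum r c [] = 0\<^sub>m r c"
  by (simp add: msum_def)

lemma msum_Cons [simp]: "msum r c (X # Xs) = X + msum r c Xs"
  by (simp add: msum_def)

lemma msum_dims [simp]: "dim_row (msum r c Xs) = r" "dim_col (msum r c Xs) = c"
  by (induction Xs) auto

lemma msum_carrier_mat [simp]: "msum r c Xs \<in> carrier_mat r c"
  by (simp add: carrier_matI)

lemma index_msum: "\<forall>X\<in>set Xs. X \<in> carrier_mat r c \<Longrightarrow> i < r \<Longrightarrow> j < c \<Longrightarrow>
    msum r c Xs $$ (i,j) = (\<Sum>X\<leftarrow>Xs. X $$ (i,j))"
  by (induction Xs) auto

lemma index_msum_upt: "\<forall>l<p. f l \<in> carrier_mat r c \<Longrightarrow> i < r \<Longrightarrow> j < c \<Longrightarrow>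
    msum r c (map f [0..<p]) $$ (i,j) = (\<Sum>l<p. f l $$ (i,j))"
  by (subst index_msum) (auto simp: comp_def sum_list_sum_nth atLeast0LessThan)

lemma msum_map_zero [simp]: "msum r c (map (\<lambda>x. 0\<^sub>m r c) xs) = 0\<^sub>m r c"
  by (induction xs) auto

lemma msum_map_cong: "(\<And>x. x \<in> set xs \<Longrightarrow> f x = g x) \<Longrightarrow> msum r c (map f xs) = msum r c (map g xs)"
  by (metis map_cong)

lemma msum_append: "\<forall>X\<in>set Xs. X \<in> carrier_mat r c \<Longrightarrow>
    msum r c (Xs @ Ys) = msum r c Xs + msum r c Ys"
  by (induction Xs) (auto simp: assoc_add_mat[of _ r c])

lemma msum_concat: "\<forall>Xs\<in>set Xss. \<forall>X\<in>set Xs. X \<in> carrier_mat r c \<Longrightarrow>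
    msum r c (concat Xss) = msum r c (map (msum r c) Xss)"
  by (induction Xss) (auto simp: msum_append)

lemma msum_add: "\<forall>x\<in>set xs. f x \<in> carrier_mat r c \<and> g x \<in> carrier_mat r c \<Longrightarrow>
    msum r c (map (\<lambda>x. f x + g x) xs) = msum r c (map f xs) + msum r c (map g xs)"
proof (induction xs)
  case (Cons x xs)
  then show ?case by (intro eq_matI) auto
qed simp

lemma msum_swap: "\<forall>x\<in>set xs. \<forall>y\<in>set ys. f x y \<in> carrier_mat r c \<Longrightarrow>
    msum r c (map (\<lambda>x. msum r c (map (f x) ys)) xs) = msum r c (map (\<lambda>y. msum r c (map (\<lambda>x. f x y) xs)) ys)"
  by (induction xs) (auto simp: msum_add)

lemma msum_mult_left: assumes "A \<in> carrier_mat a r" "\<forall>x\<in>set xs. f x \<in> carrier_mat r c"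
  shows "msum a c (map (\<lambda>x. A * f x) xs) = A * msum r c (map f xs)"
  using assms(2) by (induction xs) (use assms(1) in \<open>auto simp: mult_add_distrib_mat\<close>)

lemma msum_mult_right: assumes "A \<in> carrier_mat c b" "\<forall>x\<in>set xs. f x \<in> carrier_mat r c"
  shows "msum r b (map (\<lambda>x. f x * A) xs) = msum r c (map f xs) * A"
  using assms(2) by (induction xs) (use assms(1) in \<open>auto simp: add_mult_distrib_mat\<close>)

lemma msum_mult_sandwich:
  assumes "A \<in> carrier_mat a r" "B \<in> carrier_mat c b" "\<forall>x\<in>set xs. f x \<in> carrier_mat r c"
  shows "msum a b (map (\<lambda>x. A * f x * B) xs) = A * msum r c (map f xs) * B"
proof -
  have "msum a b (map (\<lambda>x. A * f x * B) xs) = msum a c (map (\<lambda>x. A * f x) xs) * B"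
    using assms by (intro msum_mult_right) auto
  then show ?thesis
    using msum_mult_left[OF assms(1,3)] by simp
qed

lemma mtrace_msum: "\<forall>X\<in>set Xs. X \<in> carrier_mat r r \<Longrightarrow> mtrace (msum r r Xs) = (\<Sum>X\<leftarrow>Xs. mtrace X)"
  by (induction Xs) (auto simp: mtrace_add, simp add: mtrace_def)

lemma msum_mult_dag_eq_0:
  assumes car: "\<forall>N\<in>set Ns. N \<in> carrier_mat a b"
    and zero: "msum a a (map (\<lambda>N. N * dag N) Ns) = 0\<^sub>m a a"
    and N: "N \<in> set Ns"
  shows "N = 0\<^sub>m a b"
proof -
  let ?s = "\<lambda>N. \<Sum>i<a. \<Sum>j<b. (cmod (N $$ (i,j)))\<^sup>2"
  have "of_real (\<Sum>N\<leftarrow>Ns. ?s N) = (\<Sum>N\<leftarrow>Ns. mtrace (N * dag N))"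
    using car by (induction Ns) (auto simp: mtrace_mult_dag_self)
  also have "\<dots> = mtrace (msum a a (map (\<lambda>N. N * dag N) Ns))"
    using car by (subst mtrace_msum) (auto simp: comp_def)
  finally have "(\<Sum>N\<leftarrow>Ns. ?s N) = 0"
    using zero by (simp add: mtrace_def)
  then have "?s N = 0"
    using N by (subst (asm) sum_list_nonneg_eq_0_iff) (auto intro!: sum_nonneg)
  then have "\<forall>i<a. \<forall>j<b. N $$ (i,j) = 0"
    by (simp add: sum_nonneg_eq_0_iff sum_nonneg)
  then show ?thesis
    using N car by (intro eq_matI) auto
qed

lemma dag_mult_self_eq_0:
  assumes "X \<in> carrier_mat r c" "dag X * X = 0\<^sub>m c c"
  shows "X = 0\<^sub>m r c"
proof -
  have "dag X = 0\<^sub>m c r"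
    by (rule msum_mult_dag_eq_0[of "[dag X]" c r]) (use assms in auto)
  then show ?thesis
    by (metis dag_dag dag_zero)
qed

section \<open>Kraus sets\<close>

lemma kraus_set_carrier_mat: "kraus_set d1 d2 Phi Ms \<Longrightarrow> M \<in> set Ms \<Longrightarrow> M \<in> carrier_mat d2 d1"
  by (auto simp: kraus_set_def)

lemma kraus_set_dims: "kraus_set d1 d2 Phi Ms \<Longrightarrow> M \<in> set Ms \<Longrightarrow> dim_row M = d2 \<and> dim_col M = d1"
  by (auto simp: kraus_set_def)

lemma kraus_set_trace_preserving: "kraus_set d1 d2 Phi Ms \<Longrightarrow> msum d1 d1 (map (\<lambda>M. dag M * M) Ms) = 1\<^sub>m d1"
  by (simp add: kraus_set_def)

lemma kraus_set_apply: "kraus_set d1 d2 Phi Ms \<Longrightarrow> \<rho> \<in> carrier_mat d1 d1 \<Longrightarrow>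
    Phi \<rho> = msum d2 d2 (map (\<lambda>M. M * \<rho> * dag M) Ms)"
  by (simp add: kraus_set_def)

lemma kraus_set_carrier_apply: "kraus_set d1 d2 Phi Ms \<Longrightarrow> \<rho> \<in> carrier_mat d1 d1 \<Longrightarrow> Phi \<rho> \<in> carrier_mat d2 d2"
  by (simp add: kraus_set_apply)

lemma kraus_set_nonempty: assumes "kraus_set d1 d2 Phi Ms" "d1 > 0" shows "Ms \<noteq> []"
proof
  assume "Ms = []"
  then have "(0\<^sub>m d1 d1 :: complex mat) = 1\<^sub>m d1"
    using kraus_set_trace_preserving[OF assms(1)] by simp
  then have "(0\<^sub>m d1 d1 :: complex mat) $$ (0,0) = 1\<^sub>m d1 $$ (0,0)"
    by simp
  with assms(2) show False
    by simp
qed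

lemma compl_chan_dims [simp]: "dim_row (compl_chan Ms \<theta>) = length Ms" "dim_col (compl_chan Ms \<theta>) = length Ms"
  by (simp_all add: compl_chan_def)

lemma kraus_set_comp_trace_preserving:
  assumes K1: "kraus_set a b Phi1 Ks1" and K2: "kraus_set b c Phi2 Ks2"
  shows "msum a a (map (\<lambda>M. dag M * M) (concat (map (\<lambda>K2. map (\<lambda>K1. K2 * K1) Ks1) Ks2))) = 1\<^sub>m a"
proof -
  note c1 = kraus_set_dims[OF K1] and c2 = kraus_set_dims[OF K2]
  have "msum a a (map (\<lambda>M. dag M * M) (concat (map (\<lambda>K2. map (\<lambda>K1. K2 * K1) Ks1) Ks2)))
      = msum a a (map (\<lambda>K2. msum a a (map (\<lambda>K1. dag (K2 * K1) * (K2 * K1)) Ks1)) Ks2)"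
    using c1 c2 by (auto simp: map_concat comp_def msum_concat)
  also have "\<dots> = msum a a (map (\<lambda>K1. msum a a (map (\<lambda>K2. dag (K2 * K1) * (K2 * K1)) Ks2)) Ks1)"
    using c1 c2 by (intro msum_swap) auto
  also have "\<dots> = msum a a (map (\<lambda>K1. dag K1 * K1) Ks1)"
  proof (rule msum_map_cong)
    fix K1 assume k1: "K1 \<in> set Ks1"
    have "msum a a (map (\<lambda>K2. dag (K2 * K1) * (K2 * K1)) Ks2)
        = msum a a (map (\<lambda>K2. dag K1 * (dag K2 * K2) * K1) Ks2)"
    proof (rule msum_map_cong)
      fix K2 assume "K2 \<in> set Ks2"
      then show "dag (K2 * K1) * (K2 * K1) = dag K1 * (dag K2 * K2) * K1"
        using c1[OF k1] c2 by (simp add: mat_dims_simps)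
    qed
    also have "\<dots> = dag K1 * msum b b (map (\<lambda>K2. dag K2 * K2) Ks2) * K1"
      using c1[OF k1] c2 by (intro msum_mult_sandwich) auto
    also have "\<dots> = dag K1 * K1"
      using kraus_set_trace_preserving[OF K2] c1[OF k1] by simp
    finally show "msum a a (map (\<lambda>K2. dag (K2 * K1) * (K2 * K1)) Ks2) = dag K1 * K1" .
  qed
  also have "\<dots> = 1\<^sub>m a"
    by (rule kraus_set_trace_preserving[OF K1])
  finally show ?thesis .
qed

lemma kraus_set_comp_apply:
  assumes K1: "kraus_set a b Phi1 Ks1" and K2: "kraus_set b c Phi2 Ks2" and \<rho>: "\<rho> \<in> carrier_mat a a"
  shows "Phi2 (Phi1 \<rho>) = msum c c (map (\<lambda>M. M * \<rho> * dag M) (concat (map (\<lambda>K2. map (\<lambda>K1. K2 * K1) Ks1) Ks2)))"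
proof -
  note c1 = kraus_set_dims[OF K1] and c2 = kraus_set_dims[OF K2]
  have "Phi2 (Phi1 \<rho>) = msum c c (map (\<lambda>K2. K2 * msum b b (map (\<lambda>K1. K1 * \<rho> * dag K1) Ks1) * dag K2) Ks2)"
    using kraus_set_apply[OF K2 kraus_set_carrier_apply[OF K1 \<rho>]] kraus_set_apply[OF K1 \<rho>] by simp
  also have "\<dots> = msum c c (map (\<lambda>K2. msum c c (map (\<lambda>K1. K2 * K1 * \<rho> * dag (K2 * K1)) Ks1)) Ks2)"
  proof (rule msum_map_cong)
    fix K2 assume k2: "K2 \<in> set Ks2"
    have "K2 * msum b b (map (\<lambda>K1. K1 * \<rho> * dag K1) Ks1) * dag K2
        = msum c c (map (\<lambda>K1. K2 * (K1 * \<rho> * dag K1) * dag K2) Ks1)"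
      using c1 c2[OF k2] \<rho> by (intro msum_mult_sandwich[symmetric]) auto
    also have "\<dots> = msum c c (map (\<lambda>K1. K2 * K1 * \<rho> * dag (K2 * K1)) Ks1)"
    proof (rule msum_map_cong)
      fix K1 assume "K1 \<in> set Ks1"
      then show "K2 * (K1 * \<rho> * dag K1) * dag K2 = K2 * K1 * \<rho> * dag (K2 * K1)"
        using c1 c2[OF k2] \<rho> by (simp add: mat_dims_simps)
    qed
    finally show "K2 * msum b b (map (\<lambda>K1. K1 * \<rho> * dag K1) Ks1) * dag K2
        = msum c c (map (\<lambda>K1. K2 * K1 * \<rho> * dag (K2 * K1)) Ks1)" .
  qed
  also have "\<dots> = msum c c (map (\<lambda>M. M * \<rho> * dag M) (concat (map (\<lambda>K2. map (\<lambda>K1. K2 * K1) Ks1) Ks2)))"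
    using c1 c2 \<rho> by (auto simp: map_concat comp_def msum_concat)
  finally show ?thesis .
qed

lemma kraus_set_comp:
  assumes "kraus_set a b Phi1 Ks1" and "kraus_set b c Phi2 Ks2"
  shows "kraus_set a c (\<lambda>\<rho>. Phi2 (Phi1 \<rho>)) (concat (map (\<lambda>K2. map (\<lambda>K1. K2 * K1) Ks1) Ks2))"
  using kraus_set_comp_trace_preserving[OF assms] kraus_set_comp_apply[OF assms]
    kraus_set_dims[OF assms(1)] kraus_set_dims[OF assms(2)]
  by (auto simp: kraus_set_def)

lemma qchannel_comp: "qchannel a b Phi1 \<Longrightarrow> qchannel b c Phi2 \<Longrightarrow> qchannel a c (\<lambda>\<rho>. Phi2 (Phi1 \<rho>))"
  unfolding qchannel_def using kraus_set_comp by blast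

lemma qchannel_isometry_conj: "P \<in> carrier_mat d k \<Longrightarrow> dag P * P = 1\<^sub>m k \<Longrightarrow> qchannel k d (\<lambda>\<rho>. P * \<rho> * dag P)"
  unfolding qchannel_def kraus_set_def by (intro exI[of _ "[P]"]) auto

section \<open>Restriction to an invariant subspace\<close>

locale subchannel =
  fixes d k :: nat and P :: "complex mat" and Phi Psi :: "complex mat \<Rightarrow> complex mat"
  assumes isometry_carrier: "P \<in> carrier_mat d k"
    and isometry: "dag P * P = 1\<^sub>m k"
    and Psi_carrier: "\<And>\<rho>. \<rho> \<in> carrier_mat k k \<Longrightarrow> Psi \<rho> \<in> carrier_mat k k"
    and Phi_conj: "\<And>\<rho>. \<rho> \<in> carrier_mat k k \<Longrightarrow> Phi (P * \<rho> * dag P) = P * Psi \<rho> * dag P"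
begin

lemma isometry_dims [simp]: "dim_row P = d" "dim_col P = k"
  using isometry_carrier by auto

lemma isometry_cancel [simp]: "dim_row X = k \<Longrightarrow> dag P * (P * X) = X"
  by (simp flip: assoc_mult_mat_dims add: isometry)

text \<open>Since \<open>Phi\<close> maps the projection \<open>P * dag P\<close> into the range of \<open>P\<close>, the positive sum
  \<open>\<Sum> (Q M P) (Q M P)\<^sup>\<dagger>\<close> with \<open>Q = 1 - P P\<^sup>\<dagger>\<close> vanishes, so each \<open>Q M P\<close> does.\<close>

lemma kraus_mult_range:
  assumes K: "kraus_set d d Phi Ms" and M: "M \<in> set Ms"
  shows "P * (dag P * M * P) = M * P"
proof -
  note dims = kraus_set_dims[OF K]
  define Q where "Q = 1\<^sub>m d - P * dag P"
  have Q_dims [simp]: "dim_row Q = d" "dim_col Q = d"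
    by (simp_all add: Q_def)
  have QP: "Q * P = 0\<^sub>m d k"
  proof -
    have "Q * P = P - P * (dag P * P)"
      unfolding Q_def by (simp add: mat_dims_simps)
    then show ?thesis
      by (simp add: isometry minus_r_inv_mat[OF isometry_carrier])
  qed
  have "msum d d (map (\<lambda>M. (Q * M * P) * dag (Q * M * P)) Ms)
      = msum d d (map (\<lambda>M. Q * (M * (P * 1\<^sub>m k * dag P) * dag M) * dag Q) Ms)"
  proof (rule msum_map_cong)
    fix M assume "M \<in> set Ms"
    then show "(Q * M * P) * dag (Q * M * P) = Q * (M * (P * 1\<^sub>m k * dag P) * dag M) * dag Q"
      using dims by (simp add: mat_dims_simps)
  qed
  also have "\<dots> = Q * msum d d (map (\<lambda>M. M * (P * 1\<^sub>m k * dag P) * dag M) Ms) * dag Q"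
    using dims by (intro msum_mult_sandwich) auto
  also have "\<dots> = Q * Phi (P * 1\<^sub>m k * dag P) * dag Q"
    using kraus_set_apply[OF K, of "P * 1\<^sub>m k * dag P"] by simp
  also have "\<dots> = (Q * P) * (Psi (1\<^sub>m k) * dag P * dag Q)"
    using Phi_conj[of "1\<^sub>m k"] Psi_carrier[of "1\<^sub>m k"] by (simp add: mat_dims_simps)
  also have "\<dots> = 0\<^sub>m d d"
    using Psi_carrier[of "1\<^sub>m k"] by (simp add: QP)
  finally have "msum d d (map (\<lambda>N. N * dag N) (map (\<lambda>M. Q * M * P) Ms)) = 0\<^sub>m d d"
    by (simp add: comp_def)
  then have "Q * M * P = 0\<^sub>m d k"
    by (rule msum_mult_dag_eq_0[rotated]) (use M dims in auto)
  moreover have "Q * M * P = M * P - P * (dag P * M * P)"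
    unfolding Q_def using dims[OF M] by (simp add: mat_dims_simps)
  ultimately show ?thesis
    using dims[OF M] by (simp add: minus_eq_0_mat_iff[of _ d k])
qed

lemma kraus_set_restrict:
  assumes K: "kraus_set d d Phi Ms"
  shows "kraus_set k k Psi (map (\<lambda>M. dag P * M * P) Ms)"
proof -
  note dims = kraus_set_dims[OF K]
  have "msum k k (map (\<lambda>A. dag A * A) (map (\<lambda>M. dag P * M * P) Ms))
      = msum k k (map (\<lambda>M. dag P * (dag M * M) * P) Ms)"
    unfolding map_map comp_def
  proof (rule msum_map_cong)
    fix M assume M: "M \<in> set Ms"
    have "dag (dag P * M * P) * (dag P * M * P) = dag P * dag M * (P * (dag P * M * P))"
      using dims[OF M] by (simp add: mat_dims_simps)
    also have "\<dots> = dag P * (dag M * M) * P"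
      using dims[OF M] kraus_mult_range[OF K M] by (simp add: mat_dims_simps)
    finally show "dag (dag P * M * P) * (dag P * M * P) = dag P * (dag M * M) * P" .
  qed
  also have "\<dots> = dag P * msum d d (map (\<lambda>M. dag M * M) Ms) * P"
    using dims by (intro msum_mult_sandwich) auto
  also have "\<dots> = 1\<^sub>m k"
    by (simp add: kraus_set_trace_preserving[OF K] isometry)
  finally have tp: "msum k k (map (\<lambda>A. dag A * A) (map (\<lambda>M. dag P * M * P) Ms)) = 1\<^sub>m k" .
  have "Psi \<rho> = msum k k (map (\<lambda>A. A * \<rho> * dag A) (map (\<lambda>M. dag P * M * P) Ms))"
    if \<rho>: "\<rho> \<in> carrier_mat k k" for \<rho>
  proof -
    have "Psi \<rho> = dag P * (P * Psi \<rho> * dag P) * P"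
      using Psi_carrier[OF \<rho>] by (simp add: mat_dims_simps isometry)
    also have "\<dots> = dag P * msum d d (map (\<lambda>M. M * (P * \<rho> * dag P) * dag M) Ms) * P"
      using \<rho> by (simp add: Phi_conj[symmetric] kraus_set_apply[OF K])
    also have "\<dots> = msum k k (map (\<lambda>M. dag P * (M * (P * \<rho> * dag P) * dag M) * P) Ms)"
      using \<rho> dims by (intro msum_mult_sandwich[symmetric]) auto
    also have "\<dots> = msum k k (map (\<lambda>A. A * \<rho> * dag A) (map (\<lambda>M. dag P * M * P) Ms))"
      using \<rho> dims by (auto simp: mat_dims_simps intro!: msum_map_cong)
    finally show ?thesis .
  qed
  with tp dims show ?thesis
    by (auto simp: kraus_set_def)
qed

lemma compl_chan_restrict:
  assumes K: "kraus_set d d Phi Ms" and \<theta>: "\<theta> \<in> carrier_mat k k"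
  shows "compl_chan (map (\<lambda>M. dag P * M * P) Ms) \<theta> = compl_chan Ms (P * \<theta> * dag P)"
proof (rule eq_matI)
  fix j j' assume "j < dim_row (compl_chan Ms (P * \<theta> * dag P))" "j' < dim_col (compl_chan Ms (P * \<theta> * dag P))"
  then have j: "j < length Ms" "j' < length Ms"
    by (auto simp: compl_chan_def)
  define M M' where "M = Ms ! j" and "M' = Ms ! j'"
  have M: "M \<in> set Ms" "M' \<in> set Ms"
    using j by (simp_all add: M_def M'_def)
  note dims = kraus_set_dims[OF K M(1)] kraus_set_dims[OF K M(2)]
  have "mtrace (dag (dag P * M' * P) * (dag P * M * P) * \<theta>)
      = mtrace (dag P * (dag M' * (P * (dag P * M * P)) * \<theta>))"
    using dims \<theta> by (simp add: mat_dims_simps)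
  also have "\<dots> = mtrace (dag P * (dag M' * (M * P) * \<theta>))"
    by (simp add: kraus_mult_range[OF K M(1)])
  also have "\<dots> = mtrace ((dag M' * (M * P) * \<theta>) * dag P)"
    using dims \<theta> by (intro mtrace_mult_comm[of _ k d]) auto
  also have "\<dots> = mtrace (dag M' * M * (P * \<theta> * dag P))"
    using dims \<theta> by (simp add: mat_dims_simps)
  finally show "compl_chan (map (\<lambda>M. dag P * M * P) Ms) \<theta> $$ (j, j') = compl_chan Ms (P * \<theta> * dag P) $$ (j, j')"
    using j by (simp add: compl_chan_def M_def M'_def)
qed (simp_all add: compl_chan_def)

lemma degradable_restrict:
  assumes "degradable d Phi"
  shows "degradable k Psi"
proof -
  obtain Ms Lam where K: "kraus_set d d Phi Ms" and Lam: "qchannel d (length Ms) Lam"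
    and degrade: "\<forall>\<Theta>\<in>carrier_mat d d. compl_chan Ms \<Theta> = Lam (Phi \<Theta>)"
    using assms unfolding degradable_def by blast
  have "qchannel k (length Ms) (\<lambda>\<rho>. Lam (P * \<rho> * dag P))"
    using qchannel_comp[OF qchannel_isometry_conj[OF isometry_carrier isometry] Lam] .
  moreover have "compl_chan (map (\<lambda>M. dag P * M * P) Ms) \<theta> = Lam (P * Psi \<theta> * dag P)"
    if "\<theta> \<in> carrier_mat k k" for \<theta>
    using that degrade by (simp add: compl_chan_restrict[OF K] Phi_conj[symmetric])
  ultimately show ?thesis
    unfolding degradable_def using kraus_set_restrict[OF K]
    by (intro exI[of _ "map (\<lambda>M. dag P * M * P) Ms"] exI[of _ "\<lambda>\<rho>. Lam (P * \<rho> * dag P)"]) auto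
qed

end

section \<open>Independence of the Kraus set\<close>

text \<open>A matrix in row echelon form is inverted on its pivot rows by the matrix sending the
  \<open>i\<close>-th unit vector to the \<open>f i\<close>-th one, where \<open>f i\<close> is the pivot column of row \<open>i\<close>.\<close>

lemma row_echelon_form_generalized_inverse:
  fixes C :: "'a :: field mat"
  assumes C: "C \<in> carrier_mat nr nc" and echelon: "row_echelon_form C"
  shows "\<exists>K \<in> carrier_mat nc nr. C * K * C = C"
proof -
  obtain f where "pivot_fun C f nc"
    using echelon C unfolding row_echelon_form_def by auto
  note pivot = pivot_funD[of C nr, OF _ this]
  define K :: "'a mat" where "K = mat nc nr (\<lambda>(j,i). if f i < nc \<and> j = f i then 1 else 0)"
  have CK: "(C * K) $$ (u,i) = (if f i < nc \<and> u = i then 1 else 0)" if u: "u < nr" and i: "i < nr" for u i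
  proof -
    have "(C * K) $$ (u,i) = (\<Sum>j\<in>{0..<nc}. C $$ (u,j) * (if f i < nc \<and> j = f i then 1 else 0))"
      using u i C by (simp add: K_def scalar_prod_def)
    also have "\<dots> = (if f i < nc then C $$ (u, f i) else 0)"
      by (simp add: if_distrib[of "(*) _"] sum.delta' cong: if_cong)
    also have "\<dots> = (if f i < nc \<and> u = i then 1 else 0)"
      using pivot(4)[OF _ i] pivot(5)[OF _ i _ u] C by auto
    finally show ?thesis .
  qed
  have "C * K * C = C"
  proof (rule eq_matI)
    fix u j assume "u < dim_row C" "j < dim_col C"
    then have u: "u < nr" and j: "j < nc"
      using C by auto
    have "(C * K * C) $$ (u,j) = (\<Sum>i\<in>{0..<nr}. (C * K) $$ (u,i) * C $$ (i,j))"
      using u j C by (simp add: K_def scalar_prod_def)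
    also have "\<dots> = (\<Sum>i\<in>{0..<nr}. if i = u then (if f u < nc then C $$ (u,j) else 0) else 0)"
      using u by (intro sum.cong) (auto simp: CK)
    also have "\<dots> = (if f u < nc then C $$ (u,j) else 0)"
      using u by simp
    also have "\<dots> = C $$ (u,j)"
      using pivot(1)[OF _ u] pivot(2)[OF _ u, of j] j C by (cases "f u < nc") auto
    finally show "(C * K * C) $$ (u,j) = C $$ (u,j)" .
  qed (use C in \<open>auto simp: K_def\<close>)
  then show ?thesis
    by (auto simp: K_def)
qed

lemma generalized_inverse_exists:
  fixes J :: "'a :: field mat"
  assumes J: "J \<in> carrier_mat nr nc"
  shows "\<exists>K \<in> carrier_mat nc nr. J * K * J = J"
proof -
  obtain C where "gauss_jordan_single J = C"
    by simp
  note gauss = gauss_jordan_single[OF J this]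
  obtain P Q where CPJ: "C = P * J" and P: "P \<in> carrier_mat nr nr" and Q: "Q \<in> carrier_mat nr nr"
    and QP: "Q * P = 1\<^sub>m nr"
    using gauss(4) by blast
  obtain K where K: "K \<in> carrier_mat nc nr" and CKC: "C * K * C = C"
    using row_echelon_form_generalized_inverse[OF gauss(2,3)] by blast
  have JQC: "J = Q * C"
    using J P Q by (simp add: CPJ QP flip: assoc_mult_mat[of Q nr nr P nr J nc])
  have "J * (K * P) * J = J * K * (P * J)"
    using J K P by simp
  also have "\<dots> = Q * C * K * C"
    by (simp only: CPJ[symmetric] JQC[symmetric])
  also have "\<dots> = Q * (C * K * C)"
    using Q K gauss(2) by simp
  finally have "J * (K * P) * J = J"
    by (simp add: CKC JQC[symmetric])
  then show ?thesis
    using K P by auto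
qed

lemma hermitian_generalized_inverse_exists:
  fixes J :: "complex mat"
  assumes J: "J \<in> carrier_mat N N" and dag_J: "dag J = J"
  shows "\<exists>K \<in> carrier_mat N N. dag K = K \<and> J * K * J = J \<and> K * J * K = K"
proof -
  obtain K0 where K0: "K0 \<in> carrier_mat N N" and JK0J: "J * K0 * J = J"
    using generalized_inverse_exists[OF J] by blast
  have JdK0J: "J * dag K0 * J = J"
    using arg_cong[OF JK0J, of dag] J K0 by (simp add: mat_dims_simps dag_J)
  define K where "K = dag K0 * J * K0"
  have K: "K \<in> carrier_mat N N"
    using J K0 by (simp add: K_def)
  have dag_K: "dag K = K"
    using J K0 by (simp add: K_def mat_dims_simps dag_J)
  have "J * K * J = (J * dag K0 * J) * K0 * J"
    using J K0 by (simp add: K_def mat_dims_simps)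
  then have JKJ: "J * K * J = J"
    by (simp add: JdK0J JK0J)
  have "K * J * K = dag K0 * ((J * K0 * J) * dag K0 * J) * K0"
    using J K0 by (simp add: K_def mat_dims_simps)
  also have "\<dots> = K"
    by (simp add: JK0J JdK0J K_def)
  finally show ?thesis
    using K dag_K JKJ by blast
qed

text \<open>If \<open>K\<close> is a generalized inverse of the Gram matrix \<open>J = H\<^sup>\<dagger> H\<close>, then \<open>X = H K J - H\<close>
  satisfies \<open>H\<^sup>\<dagger> X = 0\<close>, hence \<open>X\<^sup>\<dagger> X = 0\<close>.\<close>

lemma gram_generalized_inverse_cancel:
  fixes H K :: "complex mat"
  assumes H: "H \<in> carrier_mat s N" and K: "K \<in> carrier_mat N N"
    and ginv: "dag H * H * K * (dag H * H) = dag H * H"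
  shows "H * K * (dag H * H) = H"
proof -
  define X where "X = H * K * (dag H * H) - H"
  have X: "X \<in> carrier_mat s N"
    using H K by (auto simp: X_def)
  have "dag H * X = dag H * H * K * (dag H * H) - dag H * H"
    using H K by (simp add: X_def mat_dims_simps)
  then have HX: "dag H * X = 0\<^sub>m N N"
    using H by (simp add: ginv minus_r_inv_mat[of _ N N])
  have "dag X = dag H * H * dag K * dag H - dag H"
    using H K by (simp add: X_def mat_dims_simps)
  then have "dag X * X = dag H * H * dag K * (dag H * X) - dag H * X"
    using H K X by (simp add: mat_dims_simps)
  then have "dag X * X = 0\<^sub>m N N"
    using H K by (simp add: HX)
  then have "X = 0\<^sub>m s N"
    using X by (rule dag_mult_self_eq_0[rotated])
  then show ?thesis
    using H K by (simp add: X_def minus_eq_0_mat_iff[of _ s N])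
qed

text \<open>With a hermitian generalized inverse \<open>K\<close> of the common Gram matrix \<open>J\<close>, the matrix
  \<open>Z = F K G\<^sup>\<dagger>\<close> is a partial isometry with \<open>Z G = F\<close>.\<close>

lemma gram_eq_partial_isometry:
  fixes F G :: "complex mat"
  assumes F: "F \<in> carrier_mat r N" and G: "G \<in> carrier_mat p N" and gram: "dag F * F = dag G * G"
  shows "\<exists>Z \<in> carrier_mat r p. Z * G = F \<and> dag Z * Z * (dag Z * Z) = dag Z * Z \<and> dag Z * Z * G = G"
proof -
  define J where "J = dag G * G"
  have J: "J \<in> carrier_mat N N" and dag_J: "dag J = J"
    using G by (simp_all add: J_def dag_mult)
  obtain K where K: "K \<in> carrier_mat N N" and dag_K: "dag K = K"
    and JKJ: "J * K * J = J" and KJK: "K * J * K = K"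
    using hermitian_generalized_inverse_exists[OF J dag_J] by blast
  have FKJ: "F * K * J = F"
    using gram_generalized_inverse_cancel[OF F K] JKJ by (simp add: gram J_def)
  have GKJ: "G * K * J = G"
    using gram_generalized_inverse_cancel[OF G K] JKJ by (simp add: J_def)
  define Z where "Z = F * K * dag G"
  have Z: "Z \<in> carrier_mat r p"
    using F G K by (simp add: Z_def)
  have "Z * G = F * K * J"
    using F G K by (simp add: Z_def J_def mat_dims_simps)
  then have ZG: "Z * G = F"
    by (simp add: FKJ)
  have "dag Z * Z = G * (K * J * K) * dag G"
    using F G K by (simp add: Z_def J_def mat_dims_simps dag_K flip: gram)
  then have ZZ: "dag Z * Z = G * K * dag G"
    by (simp add: KJK)
  have "dag Z * Z * (dag Z * Z) = G * (K * J * K) * dag G"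
    unfolding ZZ using G K by (simp add: J_def mat_dims_simps)
  then have "dag Z * Z * (dag Z * Z) = dag Z * Z"
    by (simp add: KJK ZZ)
  moreover have "dag Z * Z * G = G * K * J"
    unfolding ZZ using G K by (simp add: J_def mat_dims_simps)
  then have "dag Z * Z * G = G"
    by (simp add: GKJ)
  ultimately show ?thesis
    using Z ZG by blast
qed

definition elem_mat :: "nat \<Rightarrow> nat \<Rightarrow> nat \<Rightarrow> nat \<Rightarrow> complex mat" where
  "elem_mat r c a b = mat r c (\<lambda>(i,j). if i = a \<and> j = b then 1 else 0)"

lemma elem_mat_carrier_mat [simp]: "elem_mat r c a b \<in> carrier_mat r c"
  by (simp add: elem_mat_def)

lemma elem_mat_dims [simp]: "dim_row (elem_mat r c a b) = r" "dim_col (elem_mat r c a b) = c"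
  by (simp_all add: elem_mat_def)

lemma msum_dag_elem_mat_mult_elem_mat:
  assumes "0 < r"
  shows "msum p p (map (\<lambda>i. dag (elem_mat r p 0 i) * elem_mat r p 0 i) [0..<p]) = 1\<^sub>m p"
proof (rule eq_matI)
  fix u v assume "u < dim_row (1\<^sub>m p :: complex mat)" "v < dim_col (1\<^sub>m p :: complex mat)"
  then have u: "u < p" and v: "v < p"
    by auto
  have elem: "(dag (elem_mat r p 0 i) * elem_mat r p 0 i) $$ (u,v) = (if i = u then (if v = u then 1 else 0) else 0)" for i
  proof -
    have "(dag (elem_mat r p 0 i) * elem_mat r p 0 i) $$ (u,v)
        = (\<Sum>s\<in>{0..<r}. cnj (elem_mat r p 0 i $$ (s,u)) * elem_mat r p 0 i $$ (s,v))"
      using u v by (simp add: scalar_prod_def)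
    also have "\<dots> = (\<Sum>s\<in>{0..<r}. if s = 0 then (if u = i \<and> v = i then 1 else 0) else 0)"
      using u v by (intro sum.cong) (auto simp: elem_mat_def)
    finally show ?thesis
      using assms by auto
  qed
  show "msum p p (map (\<lambda>i. dag (elem_mat r p 0 i) * elem_mat r p 0 i) [0..<p]) $$ (u,v) = 1\<^sub>m p $$ (u,v)"
    using u v by (simp add: index_msum_upt carrier_matI elem)
qed simp_all

text \<open>Conjugation by a partial isometry \<open>Z\<close> is trace preserving on the range of \<open>Z\<^sup>\<dagger> Z\<close>;
  it is completed to a channel by sending the complementary part into a fixed pure state.\<close>

lemma partial_isometry_channel:
  assumes Z: "Z \<in> carrier_mat r p" and r: "0 < r"
    and proj: "dag Z * Z * (dag Z * Z) = dag Z * Z"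
  shows "\<exists>R. qchannel p r R \<and> (\<forall>X\<in>carrier_mat p p. dag Z * Z * X = X \<longrightarrow> R X = Z * X * dag Z)"
proof -
  define S where "S = dag Z * Z"
  define Q where "Q = 1\<^sub>m p - S"
  define E where "E i = elem_mat r p 0 i" for i
  define Rs where "Rs = Z # map (\<lambda>i. E i * Q) [0..<p]"
  define R where "R X = msum r r (map (\<lambda>M. M * X * dag M) Rs)" for X
  have S: "S \<in> carrier_mat p p" and Q: "Q \<in> carrier_mat p p"
    using Z by (auto simp: S_def Q_def)
  have dag_Q: "dag Q = Q"
    using Z by (simp add: Q_def S_def mat_dims_simps)
  have QQ: "Q * Q = Q"
  proof -
    have "Q * Q = 1\<^sub>m p - S - (S - S * S)"
      using S by (simp add: Q_def mat_dims_simps)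
    also have "\<dots> = Q"
      using proj by (intro eq_matI) (auto simp: Q_def S_def)
    finally show ?thesis .
  qed
  have "msum p p (map (\<lambda>M. dag M * M) Rs) = S + msum p p (map (\<lambda>i. Q * (dag (E i) * E i) * Q) [0..<p])"
    using Q by (simp add: Rs_def S_def comp_def E_def mat_dims_simps dag_Q)
  also have "msum p p (map (\<lambda>i. Q * (dag (E i) * E i) * Q) [0..<p])
      = Q * msum p p (map (\<lambda>i. dag (E i) * E i) [0..<p]) * Q"
    using Q by (intro msum_mult_sandwich) (auto simp: E_def)
  also have "\<dots> = Q * Q"
    using Q r by (simp add: E_def msum_dag_elem_mat_mult_elem_mat)
  also have "S + Q * Q = 1\<^sub>m p"
    unfolding QQ using S by (intro eq_matI) (auto simp: Q_def)
  finally have "kraus_set p r R Rs"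
    using Z Q by (auto simp: kraus_set_def R_def Rs_def E_def)
  moreover have "R X = Z * X * dag Z" if X: "X \<in> carrier_mat p p" and SX: "S * X = X" for X
  proof -
    have "Q * X = 0\<^sub>m p p"
      using X S SX by (simp add: Q_def mat_dims_simps)
    then have "E i * Q * X * dag (E i * Q) = 0\<^sub>m r r" for i
      using X Q by (simp add: E_def mat_dims_simps)
    then have "msum r r (map (\<lambda>i. E i * Q * X * dag (E i * Q)) [0..<p]) = 0\<^sub>m r r"
      by simp
    then show ?thesis
      using X Z by (simp add: R_def Rs_def comp_def)
  qed
  ultimately show ?thesis
    unfolding qchannel_def S_def by blast
qed

text \<open>Row \<open>l\<close> of \<open>kraus_vec_mat k Ms\<close> is the row-major vectorisation of the \<open>l\<close>-th Kraus
  operator, and \<open>kron_id k \<theta>\<close> is \<open>1\<^sub>k \<otimes> \<theta>\<close>; together they write the complementary channel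
  as a conjugation, \<open>compl_chan Ms \<theta> = V (1 \<otimes> \<theta>) V\<^sup>\<dagger>\<close>.\<close>

definition kraus_vec_mat :: "nat \<Rightarrow> complex mat list \<Rightarrow> complex mat" where
  "kraus_vec_mat k Ms = mat (length Ms) (k * k) (\<lambda>(l,x). Ms ! l $$ (x div k, x mod k))"

definition kron_id :: "nat \<Rightarrow> complex mat \<Rightarrow> complex mat" where
  "kron_id k \<theta> = mat (k * k) (k * k) (\<lambda>(y,x). if y div k = x div k then \<theta> $$ (y mod k, x mod k) else 0)"

lemma less_square_div_mod:
  fixes x k :: nat
  assumes "x < k * k"
  shows "x div k < k" "x mod k < k"
  using assms by (auto simp: less_mult_imp_div_less) (metis mod_less_divisor mult_eq_0_iff neq0_conv not_less_zero)

lemma kraus_vec_mat_dims [simp]: "dim_row (kraus_vec_mat k Ms) = length Ms" "dim_col (kraus_vec_mat k Ms) = k * k"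
  by (simp_all add: kraus_vec_mat_def)

lemma kron_id_dims [simp]: "dim_row (kron_id k \<theta>) = k * k" "dim_col (kron_id k \<theta>) = k * k"
  by (simp_all add: kron_id_def)

lemma sum_lessThan_square:
  fixes k :: nat
  shows "(\<Sum>x<k * k. f x) = (\<Sum>a<k. \<Sum>b<k. f (a * k + b))"
proof -
  have "(\<Sum>x<k * k. f x) = (\<Sum>a<k. sum f {a * k..<a * k + k})"
    by (rule sum.nat_group[symmetric])
  also have "\<dots> = (\<Sum>a<k. \<Sum>b<k. f (a * k + b))"
  proof (rule sum.cong[OF refl])
    fix a
    have "sum f {a * k..<a * k + k} = sum f {0 + a * k..<k + a * k}"
      by (simp add: add.commute)
    also have "\<dots> = (\<Sum>b\<in>{0..<k}. f (b + a * k))"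
      by (rule sum.shift_bounds_nat_ivl)
    finally show "sum f {a * k..<a * k + k} = (\<Sum>b<k. f (a * k + b))"
      by (simp add: atLeast0LessThan add.commute)
  qed
  finally show ?thesis .
qed

lemma index_kraus_vec_mat_mult_kron_id:
  assumes "l < length Ms" "x < k * k"
  shows "(kraus_vec_mat k Ms * kron_id k \<theta>) $$ (l,x) = (\<Sum>b<k. Ms ! l $$ (x div k, b) * \<theta> $$ (b, x mod k))"
proof -
  note x = less_square_div_mod[OF assms(2)]
  have "(kraus_vec_mat k Ms * kron_id k \<theta>) $$ (l,x)
      = (\<Sum>y<k * k. Ms ! l $$ (y div k, y mod k) * (if x div k = y div k then \<theta> $$ (y mod k, x mod k) else 0))"
    using assms by (auto simp: scalar_prod_def atLeast0LessThan kraus_vec_mat_def kron_id_def intro!: sum.cong)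
  also have "\<dots> = (\<Sum>a<k. \<Sum>b<k. Ms ! l $$ (a, b) * (if x div k = a then \<theta> $$ (b, x mod k) else 0))"
    by (subst sum_lessThan_square) (intro sum.cong refl, simp)
  also have "\<dots> = (\<Sum>a<k. if a = x div k then (\<Sum>b<k. Ms ! l $$ (a, b) * \<theta> $$ (b, x mod k)) else 0)"
    by (intro sum.cong refl) auto
  also have "\<dots> = (\<Sum>b<k. Ms ! l $$ (x div k, b) * \<theta> $$ (b, x mod k))"
    using x by (simp add: sum.delta')
  finally show ?thesis .
qed

lemma compl_chan_eq_kraus_vec_mat:
  assumes Ms: "\<forall>M\<in>set Ms. M \<in> carrier_mat k k" and \<theta>: "\<theta> \<in> carrier_mat k k"
  shows "compl_chan Ms \<theta> = kraus_vec_mat k Ms * kron_id k \<theta> * dag (kraus_vec_mat k Ms)"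
proof (rule eq_matI)
  let ?V = "kraus_vec_mat k Ms"
  fix l l' assume "l < dim_row (?V * kron_id k \<theta> * dag ?V)" "l' < dim_col (?V * kron_id k \<theta> * dag ?V)"
  then have l: "l < length Ms" "l' < length Ms"
    by auto
  define A B where "A = Ms ! l" and "B = Ms ! l'"
  have A: "A \<in> carrier_mat k k" and B: "B \<in> carrier_mat k k"
    using Ms l by (auto simp: A_def B_def)
  have "compl_chan Ms \<theta> $$ (l,l') = (\<Sum>i<k. \<Sum>a<k. cnj (B $$ (a,i)) * (\<Sum>b<k. A $$ (a,b) * \<theta> $$ (b,i)))"
    using l A B \<theta> by (simp add: compl_chan_def mtrace_def scalar_prod_def atLeast0LessThan A_def B_def)
  also have "\<dots> = (\<Sum>a<k. \<Sum>i<k. (\<Sum>b<k. A $$ (a,b) * \<theta> $$ (b,i)) * cnj (B $$ (a,i)))"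
    by (subst sum.swap) (simp add: mult.commute)
  also have "\<dots> = (\<Sum>x<k * k. (\<Sum>b<k. A $$ (x div k, b) * \<theta> $$ (b, x mod k)) * cnj (B $$ (x div k, x mod k)))"
    by (subst sum_lessThan_square) (intro sum.cong refl, simp)
  also have "\<dots> = (\<Sum>x<k * k. (?V * kron_id k \<theta>) $$ (l,x) * cnj (?V $$ (l',x)))"
  proof (intro sum.cong refl)
    fix x assume "x \<in> {..<k * k}"
    then have x: "x < k * k"
      by simp
    show "(\<Sum>b<k. A $$ (x div k, b) * \<theta> $$ (b, x mod k)) * cnj (B $$ (x div k, x mod k))
        = (?V * kron_id k \<theta>) $$ (l,x) * cnj (?V $$ (l',x))"
      unfolding index_kraus_vec_mat_mult_kron_id[OF l(1) x] using l x by (simp add: kraus_vec_mat_def A_def B_def)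
  qed
  also have "\<dots> = (?V * kron_id k \<theta> * dag ?V) $$ (l,l')"
    using l by (simp add: scalar_prod_def atLeast0LessThan)
  finally show "compl_chan Ms \<theta> $$ (l,l') = (?V * kron_id k \<theta> * dag ?V) $$ (l,l')" .
qed (simp_all add: compl_chan_def)

lemma index_mult_elem_mat_mult_dag:
  assumes A: "A \<in> carrier_mat k k" and "u < k" "v < k" "i < k" "j < k"
  shows "(A * elem_mat k k u v * dag A) $$ (i,j) = A $$ (i,u) * cnj (A $$ (j,v))"
proof -
  have Au: "(A * elem_mat k k u v) $$ (i,t) = (if t = v then A $$ (i,u) else 0)" if "t < k" for t
  proof -
    have "(A * elem_mat k k u v) $$ (i,t) = (\<Sum>s\<in>{0..<k}. A $$ (i,s) * (if s = u \<and> t = v then 1 else 0))"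
      using A assms that by (simp add: elem_mat_def scalar_prod_def)
    also have "\<dots> = (\<Sum>s\<in>{0..<k}. if s = u then (if t = v then A $$ (i,s) else 0) else 0)"
      by (intro sum.cong) auto
    finally show ?thesis
      using assms by (simp add: sum.delta')
  qed
  have "(A * elem_mat k k u v * dag A) $$ (i,j) = (\<Sum>t\<in>{0..<k}. (A * elem_mat k k u v) $$ (i,t) * cnj (A $$ (j,t)))"
    using A assms by (simp add: scalar_prod_def)
  also have "\<dots> = (\<Sum>t\<in>{0..<k}. if t = v then A $$ (i,u) * cnj (A $$ (j,t)) else 0)"
    by (intro sum.cong) (auto simp: Au)
  finally show ?thesis
    using assms by (simp add: sum.delta')
qed

lemma index_gram_kraus_vec_mat:
  assumes K: "kraus_set k k Phi Ms" and x: "x < k * k" and y: "y < k * k"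
  shows "(dag (kraus_vec_mat k Ms) * kraus_vec_mat k Ms) $$ (x,y)
    = Phi (elem_mat k k (y mod k) (x mod k)) $$ (y div k, x div k)"
proof -
  note dm = less_square_div_mod[OF x] less_square_div_mod[OF y]
  have "(dag (kraus_vec_mat k Ms) * kraus_vec_mat k Ms) $$ (x,y)
      = (\<Sum>l<length Ms. (Ms ! l * elem_mat k k (y mod k) (x mod k) * dag (Ms ! l)) $$ (y div k, x div k))"
    using x y dm kraus_set_carrier_mat[OF K]
    by (auto simp: scalar_prod_def atLeast0LessThan kraus_vec_mat_def index_mult_elem_mat_mult_dag mult.commute intro!: sum.cong)
  also have "\<dots> = (\<Sum>M\<leftarrow>Ms. (M * elem_mat k k (y mod k) (x mod k) * dag M) $$ (y div k, x div k))"
    by (simp add: sum_list_sum_nth atLeast0LessThan)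
  also have "\<dots> = msum k k (map (\<lambda>M. M * elem_mat k k (y mod k) (x mod k) * dag M) Ms) $$ (y div k, x div k)"
    using dm kraus_set_carrier_mat[OF K] by (subst index_msum) (auto simp: comp_def)
  also have "\<dots> = Phi (elem_mat k k (y mod k) (x mod k)) $$ (y div k, x div k)"
    by (simp add: kraus_set_apply[OF K])
  finally show ?thesis .
qed

lemma gram_kraus_vec_mat_eq:
  assumes "kraus_set k k Phi As" "kraus_set k k Phi Cs"
  shows "dag (kraus_vec_mat k Cs) * kraus_vec_mat k Cs = dag (kraus_vec_mat k As) * kraus_vec_mat k As"
proof (rule eq_matI)
  fix x y assume "x < dim_row (dag (kraus_vec_mat k As) * kraus_vec_mat k As)"
    "y < dim_col (dag (kraus_vec_mat k As) * kraus_vec_mat k As)"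
  then show "(dag (kraus_vec_mat k Cs) * kraus_vec_mat k Cs) $$ (x,y)
      = (dag (kraus_vec_mat k As) * kraus_vec_mat k As) $$ (x,y)"
    using index_gram_kraus_vec_mat[OF assms(1), of x y] index_gram_kraus_vec_mat[OF assms(2), of x y] by simp
qed simp_all

lemma compl_chan_kraus_sets_factor:
  assumes k: "0 < k" and KA: "kraus_set k k Phi As" and KC: "kraus_set k k Phi Cs"
  shows "\<exists>R. qchannel (length As) (length Cs) R \<and> (\<forall>\<theta>\<in>carrier_mat k k. compl_chan Cs \<theta> = R (compl_chan As \<theta>))"
proof -
  define G F where "G = kraus_vec_mat k As" and "F = kraus_vec_mat k Cs"
  have G: "G \<in> carrier_mat (length As) (k * k)" and F: "F \<in> carrier_mat (length Cs) (k * k)"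
    by (simp_all add: G_def F_def carrier_matI)
  obtain Z where Z: "Z \<in> carrier_mat (length Cs) (length As)" and ZG: "Z * G = F"
    and proj: "dag Z * Z * (dag Z * Z) = dag Z * Z" and SG: "dag Z * Z * G = G"
    using gram_eq_partial_isometry[OF F G] gram_kraus_vec_mat_eq[OF KA KC] by (auto simp: G_def F_def)
  obtain R where R: "qchannel (length As) (length Cs) R"
    and conj: "\<forall>X\<in>carrier_mat (length As) (length As). dag Z * Z * X = X \<longrightarrow> R X = Z * X * dag Z"
    using partial_isometry_channel[OF Z _ proj] kraus_set_nonempty[OF KC k] by auto
  have "compl_chan Cs \<theta> = R (compl_chan As \<theta>)" if \<theta>: "\<theta> \<in> carrier_mat k k" for \<theta>
  proof -
    have As: "compl_chan As \<theta> = G * kron_id k \<theta> * dag G"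
      using kraus_set_carrier_mat[OF KA] \<theta> by (simp add: G_def compl_chan_eq_kraus_vec_mat)
    have "dag Z * Z * (G * kron_id k \<theta> * dag G) = (dag Z * Z * G) * kron_id k \<theta> * dag G"
      using G Z by (simp add: mat_dims_simps)
    then have "R (compl_chan As \<theta>) = Z * (G * kron_id k \<theta> * dag G) * dag Z"
      using conj G SG by (simp add: As)
    also have "\<dots> = (Z * G) * kron_id k \<theta> * dag (Z * G)"
      using G Z by (simp add: mat_dims_simps)
    also have "\<dots> = F * kron_id k \<theta> * dag F"
      by (simp only: ZG)
    also have "\<dots> = compl_chan Cs \<theta>"
      using kraus_set_carrier_mat[OF KC] \<theta> by (simp add: F_def compl_chan_eq_kraus_vec_mat[OF _ \<theta>])
    finally show ?thesis ..
  qed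
  with R show ?thesis
    by blast
qed

lemma degradable_kraus_set:
  assumes "0 < d" and "degradable d Phi" and K: "kraus_set d d Phi Cs"
  shows "\<exists>Lam. qchannel d (length Cs) Lam \<and> (\<forall>\<theta>\<in>carrier_mat d d. compl_chan Cs \<theta> = Lam (Phi \<theta>))"
proof -
  obtain As LamA where KA: "kraus_set d d Phi As" and LamA: "qchannel d (length As) LamA"
    and degrade: "\<forall>\<theta>\<in>carrier_mat d d. compl_chan As \<theta> = LamA (Phi \<theta>)"
    using assms(2) unfolding degradable_def by blast
  obtain R where R: "qchannel (length As) (length Cs) R"
    and factor: "\<forall>\<theta>\<in>carrier_mat d d. compl_chan Cs \<theta> = R (compl_chan As \<theta>)"
    using compl_chan_kraus_sets_factor[OF assms(1) KA K] by blast
  show ?thesis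
    using qchannel_comp[OF LamA R] factor degrade by auto
qed

section \<open>Direct sums\<close>

definition coord_embed :: "nat \<Rightarrow> nat \<Rightarrow> nat \<Rightarrow> complex mat" where
  "coord_embed N k s = mat N k (\<lambda>(i,j). if i = j + s then 1 else 0)"

text \<open>The projectors
  \<open>P\<^sub>X\<^sub>X\<close> of the paper are \<open>X * dag X\<close>, and the block \<open>\<Theta>\<^sub>X\<^sub>Y\<close> is \<open>dag X * \<Theta> * Y\<close>.\<close>

abbreviation embed_fst :: "nat \<Rightarrow> nat \<Rightarrow> complex mat" where
  "embed_fst n m \<equiv> coord_embed (n + m) n 0"

abbreviation embed_snd :: "nat \<Rightarrow> nat \<Rightarrow> complex mat" where
  "embed_snd n m \<equiv> coord_embed (n + m) m n"

lemma coord_embed_dims [simp]: "dim_row (coord_embed N k s) = N" "dim_col (coord_embed N k s) = k"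
  by (simp_all add: coord_embed_def)

lemma coord_embed_carrier_mat [simp]: "coord_embed N k s \<in> carrier_mat N k"
  by (simp add: carrier_matI)

lemma index_coord_embed [simp]: "i < N \<Longrightarrow> j < k \<Longrightarrow> coord_embed N k s $$ (i,j) = (if i = j + s then 1 else 0)"
  by (simp add: coord_embed_def)

lemma index_coord_embed_mult:
  assumes "dim_row X = k" "i < N" "j < dim_col X"
  shows "(coord_embed N k s * X) $$ (i,j) = (if s \<le> i \<and> i < s + k then X $$ (i - s, j) else 0)"
proof -
  have "(coord_embed N k s * X) $$ (i,j) = (\<Sum>t\<in>{0..<k}. (if i = t + s then 1 else 0) * X $$ (t,j))"
    using assms by (simp add: coord_embed_def scalar_prod_def)
  also have "\<dots> = (\<Sum>t\<in>{0..<k}. if t = i - s then (if s \<le> i then X $$ (t,j) else 0) else 0)"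
    by (intro sum.cong) auto
  finally show ?thesis
    by (auto simp: sum.delta')
qed

lemma index_mult_dag_coord_embed:
  assumes "dim_col X = k" "i < dim_row X" "j < N"
  shows "(X * dag (coord_embed N k s)) $$ (i,j) = (if s \<le> j \<and> j < s + k then X $$ (i, j - s) else 0)"
proof -
  have "(X * dag (coord_embed N k s)) $$ (i,j) = (\<Sum>t\<in>{0..<k}. X $$ (i,t) * cnj (if j = t + s then 1 else 0))"
    using assms by (simp add: coord_embed_def scalar_prod_def)
  also have "\<dots> = (\<Sum>t\<in>{0..<k}. if t = j - s then (if s \<le> j then X $$ (i,t) else 0) else 0)"
    by (intro sum.cong) auto
  finally show ?thesis
    by (auto simp: sum.delta')
qed

lemma index_dag_coord_embed_mult:
  assumes "dim_row M = N" "i < k" "j < dim_col M" "s + k \<le> N"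
  shows "(dag (coord_embed N k s) * M) $$ (i,j) = M $$ (i + s, j)"
proof -
  have "(dag (coord_embed N k s) * M) $$ (i,j) = (\<Sum>r\<in>{0..<N}. cnj (if r = i + s then 1 else 0) * M $$ (r,j))"
    using assms by (simp add: coord_embed_def scalar_prod_def)
  also have "\<dots> = (\<Sum>r\<in>{0..<N}. if r = i + s then M $$ (r,j) else 0)"
    by (intro sum.cong) auto
  finally show ?thesis
    using assms by (simp add: sum.delta')
qed

lemma index_mult_coord_embed:
  assumes "dim_col M = N" "i < dim_row M" "j < k" "s + k \<le> N"
  shows "(M * coord_embed N k s) $$ (i,j) = M $$ (i, j + s)"
proof -
  have "(M * coord_embed N k s) $$ (i,j) = (\<Sum>r\<in>{0..<N}. M $$ (i,r) * (if r = j + s then 1 else 0))"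
    using assms by (simp add: coord_embed_def scalar_prod_def)
  also have "\<dots> = (\<Sum>r\<in>{0..<N}. if r = j + s then M $$ (i,r) else 0)"
    by (intro sum.cong) auto
  finally show ?thesis
    using assms by (simp add: sum.delta')
qed

lemma index_coord_embed_compress:
  assumes M: "M \<in> carrier_mat N N'" and "i < k" "j < l" "s + k \<le> N" "t + l \<le> N'"
  shows "(dag (coord_embed N k s) * M * coord_embed N' l t) $$ (i,j) = M $$ (i + s, j + t)"
proof -
  have "dag (coord_embed N k s) * M \<in> carrier_mat k N'"
    using M by simp
  then have "(dag (coord_embed N k s) * M * coord_embed N' l t) $$ (i,j) = (dag (coord_embed N k s) * M) $$ (i, j + t)"
    using assms by (intro index_mult_coord_embed) auto
  also have "\<dots> = M $$ (i + s, j + t)"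
    using assms by (intro index_dag_coord_embed_mult) auto
  finally show ?thesis .
qed

lemma index_coord_embed_inflate:
  assumes X: "X \<in> carrier_mat k l" and "i < N" "j < N'"
  shows "(coord_embed N k s * X * dag (coord_embed N' l t)) $$ (i,j)
    = (if s \<le> i \<and> i < s + k \<and> t \<le> j \<and> j < t + l then X $$ (i - s, j - t) else 0)"
proof -
  have "coord_embed N k s * X \<in> carrier_mat N l"
    using X by simp
  then have "(coord_embed N k s * X * dag (coord_embed N' l t)) $$ (i,j)
      = (if t \<le> j \<and> j < t + l then (coord_embed N k s * X) $$ (i, j - t) else 0)"
    using assms by (intro index_mult_dag_coord_embed) auto
  then show ?thesis
    using assms by (auto simp del: index_mult_mat simp: index_coord_embed_mult)
qed

lemma coord_embed_isometry:
  assumes "s + k \<le> N"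
  shows "dag (coord_embed N k s) * coord_embed N k s = 1\<^sub>m k"
  using assms by (intro eq_matI) (auto simp del: index_mult_mat simp: index_dag_coord_embed_mult)

lemma dag_coord_embed_mult_disjoint:
  assumes "s + k \<le> t \<or> t + l \<le> s" "s + k \<le> N" "t + l \<le> N"
  shows "dag (coord_embed N k s) * coord_embed N l t = 0\<^sub>m k l"
  using assms by (intro eq_matI) (auto simp del: index_mult_mat simp: index_dag_coord_embed_mult)

lemma coord_embed_complete:
  "embed_fst n m * dag (embed_fst n m) + embed_snd n m * dag (embed_snd n m) = 1\<^sub>m (n + m)"
  by (intro eq_matI) (auto simp del: index_mult_mat simp: index_mult_dag_coord_embed)

lemma coord_embed_isometry_cancel [simp]:
  "s + k \<le> N \<Longrightarrow> dim_row X = k \<Longrightarrow> dag (coord_embed N k s) * (coord_embed N k s * X) = X"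
  by (simp add: coord_embed_isometry flip: assoc_mult_mat_dims)

lemma dag_coord_embed_mult_disjoint_cancel [simp]:
  "s + k \<le> t \<or> t + l \<le> s \<Longrightarrow> s + k \<le> N \<Longrightarrow> t + l \<le> N \<Longrightarrow> dim_row X = l \<Longrightarrow>
    dag (coord_embed N k s) * (coord_embed N l t * X) = 0\<^sub>m k (dim_col X)"
  by (simp add: dag_coord_embed_mult_disjoint flip: assoc_mult_mat_dims)

lemma embed_fst_conj:
  "\<rho> \<in> carrier_mat n n \<Longrightarrow> embed_fst n m * \<rho> * dag (embed_fst n m) = four_block_mat \<rho> (0\<^sub>m n m) (0\<^sub>m m n) (0\<^sub>m m m)"
  by (rule eq_matI) (auto simp del: index_mult_mat simp: index_coord_embed_inflate)

lemma embed_snd_conj: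
  "\<rho> \<in> carrier_mat m m \<Longrightarrow> embed_snd n m * \<rho> * dag (embed_snd n m) = four_block_mat (0\<^sub>m n n) (0\<^sub>m n m) (0\<^sub>m m n) \<rho>"
  by (rule eq_matI) (auto simp del: index_mult_mat simp: index_coord_embed_inflate)

lemma four_block_mat_blocks:
  assumes "T \<in> carrier_mat (n + m) (n + m)"
  shows "T = four_block_mat
    (dag (embed_fst n m) * T * embed_fst n m) (dag (embed_fst n m) * T * embed_snd n m)
    (dag (embed_snd n m) * T * embed_fst n m) (dag (embed_snd n m) * T * embed_snd n m)"
  using assms by (intro eq_matI) (auto simp del: index_mult_mat simp: index_coord_embed_compress)

lemma four_block_mat_compress:
  assumes "A \<in> carrier_mat n n" "B \<in> carrier_mat n m" "C \<in> carrier_mat m n" "D \<in> carrier_mat m m"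
  shows "dag (embed_fst n m) * four_block_mat A B C D * embed_fst n m = A"
    and "dag (embed_snd n m) * four_block_mat A B C D * embed_snd n m = D"
  using assms by (auto intro!: eq_matI simp del: index_mult_mat simp: index_coord_embed_compress)

lemma mtrace_conj_mult:
  assumes "P \<in> carrier_mat N k" "X \<in> carrier_mat k k" "\<Theta> \<in> carrier_mat N N"
  shows "mtrace (P * X * dag P * \<Theta>) = mtrace (X * (dag P * \<Theta> * P))"
proof -
  have "mtrace (P * X * dag P * \<Theta>) = mtrace (P * (X * dag P * \<Theta>))"
    using assms by (simp add: mat_dims_simps)
  also have "\<dots> = mtrace (X * dag P * \<Theta> * P)"
    using assms by (intro mtrace_mult_comm[of _ N k]) auto
  also have "\<dots> = mtrace (X * (dag P * \<Theta> * P))"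
    using assms by (simp add: mat_dims_simps)
  finally show ?thesis .
qed

lemma kraus_set_compress:
  assumes K: "kraus_set k r L Ks" and P: "P \<in> carrier_mat d k"
  shows "msum d d (map (\<lambda>M. dag M * M) (map (\<lambda>K. K * dag P) Ks)) = P * dag P"
    and "X \<in> carrier_mat d d \<Longrightarrow> L (dag P * X * P) = msum r r (map (\<lambda>M. M * X * dag M) (map (\<lambda>K. K * dag P) Ks))"
proof -
  note dims = kraus_set_dims[OF K]
  have "msum d d (map (\<lambda>M. dag M * M) (map (\<lambda>K. K * dag P) Ks)) = msum d d (map (\<lambda>K. P * (dag K * K) * dag P) Ks)"
    unfolding map_map comp_def using P dims by (intro msum_map_cong) (simp add: mat_dims_simps)
  also have "\<dots> = P * msum k k (map (\<lambda>K. dag K * K) Ks) * dag P"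
    by (rule msum_mult_sandwich) (use P dims in auto)
  finally show "msum d d (map (\<lambda>M. dag M * M) (map (\<lambda>K. K * dag P) Ks)) = P * dag P"
    using P by (simp add: kraus_set_trace_preserving[OF K])
  assume X: "X \<in> carrier_mat d d"
  then have PXP: "dag P * X * P \<in> carrier_mat k k"
    using P by simp
  show "L (dag P * X * P) = msum r r (map (\<lambda>M. M * X * dag M) (map (\<lambda>K. K * dag P) Ks))"
    unfolding kraus_set_apply[OF K PXP] map_map comp_def
    using P X dims by (intro msum_map_cong) (auto simp: mat_dims_simps)
qed

lemma kraus_set_direct_sum:
  assumes KA: "kraus_set n r LA KsA" and KB: "kraus_set m r LB KsB"
  shows "kraus_set (n + m) r
    (\<lambda>X. LA (dag (embed_fst n m) * X * embed_fst n m) + LB (dag (embed_snd n m) * X * embed_snd n m))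
    (map (\<lambda>K. K * dag (embed_fst n m)) KsA @ map (\<lambda>K. K * dag (embed_snd n m)) KsB)"
proof -
  let ?A = "embed_fst n m" and ?B = "embed_snd n m"
  let ?KsA = "map (\<lambda>K. K * dag ?A) KsA" and ?KsB = "map (\<lambda>K. K * dag ?B) KsB"
  note A = coord_embed_carrier_mat[of "n + m" n 0] and B = coord_embed_carrier_mat[of "n + m" m n]
  have car: "\<forall>M\<in>set (?KsA @ ?KsB). M \<in> carrier_mat r (n + m)"
    using kraus_set_dims[OF KA] kraus_set_dims[OF KB] by auto
  have "msum (n + m) (n + m) (map (\<lambda>M. dag M * M) (?KsA @ ?KsB)) = ?A * dag ?A + ?B * dag ?B"
    using car kraus_set_compress(1)[OF KA A] kraus_set_compress(1)[OF KB B] by (simp add: msum_append)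
  then have "msum (n + m) (n + m) (map (\<lambda>M. dag M * M) (?KsA @ ?KsB)) = 1\<^sub>m (n + m)"
    by (simp add: coord_embed_complete)
  moreover have "LA (dag ?A * X * ?A) + LB (dag ?B * X * ?B) = msum r r (map (\<lambda>M. M * X * dag M) (?KsA @ ?KsB))"
    if X: "X \<in> carrier_mat (n + m) (n + m)" for X
    using X kraus_set_dims[OF KA] kraus_set_dims[OF KB]
    by (auto simp: msum_append kraus_set_compress(2)[OF KA A X] kraus_set_compress(2)[OF KB B X])
  ultimately show ?thesis
    using car unfolding kraus_set_def by blast
qed

lemma block_diag_decomp:
  fixes M :: "complex mat"
  assumes M: "M \<in> carrier_mat (n + m) (n + m)"
    and "embed_fst n m * (dag (embed_fst n m) * M * embed_fst n m) = M * embed_fst n m"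
    and "embed_snd n m * (dag (embed_snd n m) * M * embed_snd n m) = M * embed_snd n m"
  shows "M = embed_fst n m * (dag (embed_fst n m) * M * embed_fst n m) * dag (embed_fst n m)
    + embed_snd n m * (dag (embed_snd n m) * M * embed_snd n m) * dag (embed_snd n m)"
proof -
  have "M = M * (embed_fst n m * dag (embed_fst n m) + embed_snd n m * dag (embed_snd n m))"
    using M by (simp add: coord_embed_complete)
  also have "\<dots> = M * embed_fst n m * dag (embed_fst n m) + M * embed_snd n m * dag (embed_snd n m)"
    using M by (simp add: mat_dims_simps)
  finally show ?thesis
    using assms(2,3) by simp
qed

lemma dag_block_diag_mult_block_diag:
  assumes "X1 \<in> carrier_mat n n" "Y1 \<in> carrier_mat n n" "X2 \<in> carrier_mat m m" "Y2 \<in> carrier_mat m m"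
  shows "dag (embed_fst n m * X1 * dag (embed_fst n m) + embed_snd n m * X2 * dag (embed_snd n m))
      * (embed_fst n m * Y1 * dag (embed_fst n m) + embed_snd n m * Y2 * dag (embed_snd n m))
    = embed_fst n m * (dag X1 * Y1) * dag (embed_fst n m) + embed_snd n m * (dag X2 * Y2) * dag (embed_snd n m)"
  using assms by (simp add: mat_dims_simps)

lemma mtrace_block_diag_mult:
  assumes X: "X \<in> carrier_mat n n" and Y: "Y \<in> carrier_mat m m" and \<Theta>: "\<Theta> \<in> carrier_mat (n + m) (n + m)"
  shows "mtrace ((embed_fst n m * X * dag (embed_fst n m) + embed_snd n m * Y * dag (embed_snd n m)) * \<Theta>)
    = mtrace (X * (dag (embed_fst n m) * \<Theta> * embed_fst n m)) + mtrace (Y * (dag (embed_snd n m) * \<Theta> * embed_snd n m))"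
proof -
  let ?A = "embed_fst n m" and ?B = "embed_snd n m"
  have A: "?A \<in> carrier_mat (n + m) n" and B: "?B \<in> carrier_mat (n + m) m"
    by simp_all
  have distrib: "(?A * X * dag ?A + ?B * Y * dag ?B) * \<Theta> = ?A * X * dag ?A * \<Theta> + ?B * Y * dag ?B * \<Theta>"
    by (rule add_mult_distrib_mat[of _ "n + m" "n + m"]) (use X Y \<Theta> in auto)
  have "mtrace ((?A * X * dag ?A + ?B * Y * dag ?B) * \<Theta>) = mtrace (?A * X * dag ?A * \<Theta>) + mtrace (?B * Y * dag ?B * \<Theta>)"
    unfolding distrib by (rule mtrace_add[of _ "n + m"]) (use X Y \<Theta> in auto)
  also have "\<dots> = mtrace (X * (dag ?A * \<Theta> * ?A)) + mtrace (Y * (dag ?B * \<Theta> * ?B))"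
    by (simp only: mtrace_conj_mult[OF A X \<Theta>] mtrace_conj_mult[OF B Y \<Theta>])
  finally show ?thesis .
qed

lemma compl_chan_block_diag:
  fixes n m :: nat
  defines "A \<equiv> embed_fst n m" and "B \<equiv> embed_snd n m"
  assumes \<Theta>: "\<Theta> \<in> carrier_mat (n + m) (n + m)"
    and Ms: "\<forall>M\<in>set Ms. M \<in> carrier_mat (n + m) (n + m)"
    and range_A: "\<forall>M\<in>set Ms. A * (dag A * M * A) = M * A"
    and range_B: "\<forall>M\<in>set Ms. B * (dag B * M * B) = M * B"
  shows "compl_chan Ms \<Theta> = compl_chan (map (\<lambda>M. dag A * M * A) Ms) (dag A * \<Theta> * A)
    + compl_chan (map (\<lambda>M. dag B * M * B) Ms) (dag B * \<Theta> * B)"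
proof (rule eq_matI)
  fix j j' assume "j < dim_row (compl_chan (map (\<lambda>M. dag A * M * A) Ms) (dag A * \<Theta> * A)
    + compl_chan (map (\<lambda>M. dag B * M * B) Ms) (dag B * \<Theta> * B))"
    "j' < dim_col (compl_chan (map (\<lambda>M. dag A * M * A) Ms) (dag A * \<Theta> * A)
    + compl_chan (map (\<lambda>M. dag B * M * B) Ms) (dag B * \<Theta> * B))"
  then have j: "j < length Ms" "j' < length Ms"
    by simp_all
  have decomp: "N = A * (dag A * N * A) * dag A + B * (dag B * N * B) * dag B" if "N \<in> set Ms" for N
    using block_diag_decomp[of N n m] Ms range_A range_B that unfolding A_def B_def by blast
  define M M' where "M = Ms ! j" and "M' = Ms ! j'"
  have M: "M \<in> set Ms" "M' \<in> set Ms"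
    using j by (simp_all add: M_def M'_def)
  define MA MB MA' MB' where "MA = dag A * M * A" and "MB = dag B * M * B"
    and "MA' = dag A * M' * A" and "MB' = dag B * M' * B"
  have blocks: "MA \<in> carrier_mat n n" "MB \<in> carrier_mat m m" "MA' \<in> carrier_mat n n" "MB' \<in> carrier_mat m m"
    using Ms M by (auto simp: MA_def MB_def MA'_def MB'_def A_def B_def)
  have "dag M' * M = dag (A * MA' * dag A + B * MB' * dag B) * (A * MA * dag A + B * MB * dag B)"
    using decomp[OF M(1)] decomp[OF M(2)] by (simp add: MA_def MB_def MA'_def MB'_def)
  also have "\<dots> = A * (dag MA' * MA) * dag A + B * (dag MB' * MB) * dag B"
    unfolding A_def B_def by (rule dag_block_diag_mult_block_diag[OF blocks(3,1,4,2)])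
  finally have prod: "dag M' * M = A * (dag MA' * MA) * dag A + B * (dag MB' * MB) * dag B" .
  have "mtrace (dag M' * M * \<Theta>) = mtrace (dag MA' * MA * (dag A * \<Theta> * A)) + mtrace (dag MB' * MB * (dag B * \<Theta> * B))"
    unfolding prod A_def B_def by (rule mtrace_block_diag_mult) (use blocks \<Theta> in auto)
  then show "compl_chan Ms \<Theta> $$ (j, j') = (compl_chan (map (\<lambda>M. dag A * M * A) Ms) (dag A * \<Theta> * A)
    + compl_chan (map (\<lambda>M. dag B * M * B) Ms) (dag B * \<Theta> * B)) $$ (j, j')"
    using j by (simp add: compl_chan_def MA_def MB_def MA'_def MB'_def M_def M'_def)
qed simp_all

section \<open>PCDS channels\<close>

lemma lin_on_zero:
  assumes lin: "lin_on r c f" and f0: "f (0\<^sub>m r c) \<in> carrier_mat r c"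
  shows "f (0\<^sub>m r c) = 0\<^sub>m r c"
proof -
  have "f ((1::complex) \<cdot>\<^sub>m 0\<^sub>m r c + 0\<^sub>m r c) = 1 \<cdot>\<^sub>m f (0\<^sub>m r c) + f (0\<^sub>m r c)"
    using lin zero_carrier_mat[of r c] unfolding lin_on_def by blast
  then have double: "f (0\<^sub>m r c) = 1 \<cdot>\<^sub>m f (0\<^sub>m r c) + f (0\<^sub>m r c)"
    by simp
  show ?thesis
  proof (rule eq_matI)
    fix i j assume "i < dim_row (0\<^sub>m r c :: complex mat)" "j < dim_col (0\<^sub>m r c :: complex mat)"
    then show "f (0\<^sub>m r c) $$ (i,j) = 0\<^sub>m r c $$ (i,j)"
      using f0 arg_cong[OF double, of "\<lambda>X. X $$ (i,j)"] by auto
  qed (use f0 in auto)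
qed

context
  fixes n m :: nat and Phi PhiAA PhiAB PhiBA PhiBB :: "complex mat \<Rightarrow> complex mat"
  assumes pcds: "pcds n m Phi PhiAA PhiAB PhiBA PhiBB"
begin

lemma pcds_apply_blocks:
  "TAA \<in> carrier_mat n n \<Longrightarrow> TAB \<in> carrier_mat n m \<Longrightarrow> TBA \<in> carrier_mat m n \<Longrightarrow> TBB \<in> carrier_mat m m \<Longrightarrow>
    Phi (four_block_mat TAA TAB TBA TBB) = four_block_mat (PhiAA TAA) (PhiAB TAB) (PhiBA TBA) (PhiBB TBB)"
  using pcds by (simp add: pcds_def)

lemma pcds_off_diag_zero: "PhiAB (0\<^sub>m n m) = 0\<^sub>m n m" "PhiBA (0\<^sub>m m n) = 0\<^sub>m m n"
  using pcds by (auto simp: pcds_def intro!: lin_on_zero)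

lemma pcds_diag_zero: "PhiAA (0\<^sub>m n n) = 0\<^sub>m n n" "PhiBB (0\<^sub>m m m) = 0\<^sub>m m m"
  using pcds by (auto simp: pcds_def intro!: lin_on_zero)

lemma pcds_subchannel_fst: "subchannel (n + m) n (embed_fst n m) Phi PhiAA"
proof
  fix \<rho> :: "complex mat" assume \<rho>: "\<rho> \<in> carrier_mat n n"
  then show "PhiAA \<rho> \<in> carrier_mat n n"
    using pcds by (simp add: pcds_def)
  then show "Phi (embed_fst n m * \<rho> * dag (embed_fst n m)) = embed_fst n m * PhiAA \<rho> * dag (embed_fst n m)"
    using \<rho> by (simp add: embed_fst_conj pcds_apply_blocks pcds_off_diag_zero pcds_diag_zero)
qed (simp_all add: coord_embed_isometry)

lemma pcds_subchannel_snd: "subchannel (n + m) m (embed_snd n m) Phi PhiBB"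
proof
  fix \<rho> :: "complex mat" assume \<rho>: "\<rho> \<in> carrier_mat m m"
  then show "PhiBB \<rho> \<in> carrier_mat m m"
    using pcds by (simp add: pcds_def)
  then show "Phi (embed_snd n m * \<rho> * dag (embed_snd n m)) = embed_snd n m * PhiBB \<rho> * dag (embed_snd n m)"
    using \<rho> by (simp add: embed_snd_conj pcds_apply_blocks pcds_off_diag_zero pcds_diag_zero)
qed (simp_all add: coord_embed_isometry)

lemma pcds_diag_blocks:
  assumes \<Theta>: "\<Theta> \<in> carrier_mat (n + m) (n + m)"
  shows "dag (embed_fst n m) * Phi \<Theta> * embed_fst n m = PhiAA (dag (embed_fst n m) * \<Theta> * embed_fst n m)"
    and "dag (embed_snd n m) * Phi \<Theta> * embed_snd n m = PhiBB (dag (embed_snd n m) * \<Theta> * embed_snd n m)"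
proof -
  let ?A = "embed_fst n m" and ?B = "embed_snd n m"
  have "Phi \<Theta> = four_block_mat (PhiAA (dag ?A * \<Theta> * ?A)) (PhiAB (dag ?A * \<Theta> * ?B))
      (PhiBA (dag ?B * \<Theta> * ?A)) (PhiBB (dag ?B * \<Theta> * ?B))"
    using \<Theta> by (subst four_block_mat_blocks[OF \<Theta>]) (simp add: pcds_apply_blocks)
  moreover have "PhiAA (dag ?A * \<Theta> * ?A) \<in> carrier_mat n n" "PhiAB (dag ?A * \<Theta> * ?B) \<in> carrier_mat n m"
    "PhiBA (dag ?B * \<Theta> * ?A) \<in> carrier_mat m n" "PhiBB (dag ?B * \<Theta> * ?B) \<in> carrier_mat m m"
    using pcds \<Theta> by (simp_all add: pcds_def)
  ultimately show "dag ?A * Phi \<Theta> * ?A = PhiAA (dag ?A * \<Theta> * ?A)"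
    and "dag ?B * Phi \<Theta> * ?B = PhiBB (dag ?B * \<Theta> * ?B)"
    by (simp_all add: four_block_mat_compress)
qed

lemma pcds_degradable_restrict:
  assumes "degradable (n + m) Phi"
  shows "degradable n PhiAA \<and> degradable m PhiBB"
  using subchannel.degradable_restrict[OF pcds_subchannel_fst assms]
    subchannel.degradable_restrict[OF pcds_subchannel_snd assms] by blast

lemma pcds_degradable_combine:
  assumes "0 < n" "0 < m" and K: "kraus_set (n + m) (n + m) Phi Ms"
    and "degradable n PhiAA" "degradable m PhiBB"
  shows "degradable (n + m) Phi"
proof -
  let ?A = "embed_fst n m" and ?B = "embed_snd n m"
  interpret A: subchannel "n + m" n ?A Phi PhiAA
    by (rule pcds_subchannel_fst)
  interpret B: subchannel "n + m" m ?B Phi PhiBB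
    by (rule pcds_subchannel_snd)
  obtain LamA LamB
    where LamA: "qchannel n (length Ms) LamA" "\<forall>\<theta>\<in>carrier_mat n n.
        compl_chan (map (\<lambda>M. dag ?A * M * ?A) Ms) \<theta> = LamA (PhiAA \<theta>)"
      and LamB: "qchannel m (length Ms) LamB" "\<forall>\<theta>\<in>carrier_mat m m.
        compl_chan (map (\<lambda>M. dag ?B * M * ?B) Ms) \<theta> = LamB (PhiBB \<theta>)"
    using degradable_kraus_set[OF assms(1,4) A.kraus_set_restrict[OF K]]
      degradable_kraus_set[OF assms(2,5) B.kraus_set_restrict[OF K]] by auto
  have "qchannel (n + m) (length Ms) (\<lambda>X. LamA (dag ?A * X * ?A) + LamB (dag ?B * X * ?B))"
    using LamA(1) LamB(1) kraus_set_direct_sum unfolding qchannel_def by blast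
  moreover have "compl_chan Ms \<Theta> = LamA (dag ?A * Phi \<Theta> * ?A) + LamB (dag ?B * Phi \<Theta> * ?B)"
    if \<Theta>: "\<Theta> \<in> carrier_mat (n + m) (n + m)" for \<Theta>
    using compl_chan_block_diag[OF \<Theta>] A.kraus_mult_range[OF K] B.kraus_mult_range[OF K]
      kraus_set_carrier_mat[OF K] LamA(2) LamB(2) \<Theta>
    by (simp add: pcds_diag_blocks[OF \<Theta>])
  ultimately show ?thesis
    unfolding degradable_def using K by blast
qed

end

theorem theorem2:
  fixes n m :: nat
    and Phi PhiAA PhiAB PhiBA PhiBB :: "complex mat \<Rightarrow> complex mat"
  assumes "n > 0" and "m > 0"
    and "qchannel (n + m) (n + m) Phi"
    and "pcds n m Phi PhiAA PhiAB PhiBA PhiBB"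
  shows "degradable (n + m) Phi \<longleftrightarrow> (degradable n PhiAA \<and> degradable m PhiBB)"
proof -
  obtain Ms where "kraus_set (n + m) (n + m) Phi Ms"
    using assms(3) unfolding qchannel_def by blast
  then show ?thesis
    using pcds_degradable_restrict[OF assms(4)] pcds_degradable_combine[OF assms(4,1,2)] by blast
qed

end
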